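(* Let $k\ge0$ and $l\ge1$. Then $$H^{(k)}=\sum_{\substack{0<n<b^{l-1}\\ k(n)=k}}\frac1n+b\sum_{\substack{b^{l-1}\le n<b^l\\ k(n)\le k}}\frac1n+\sum_{m=1}^\infty(-1)^m\sum_{\substack{b^{l-1}\le n<b^l\\ k(n)\le k}}\frac{u_{k-k(n);m}}{n^{m+1}},$$ and also $$H^{(k)}=\sum_{\substack{0<n<b^{l-1}\\ k(n)=k}}\frac1n+b\sum_{\substack{b^{l-1}\le n<b^l\\ k(n)\le k}}\frac1{n+1}+\sum_{m=1}^\infty\sum_{\substack{b^{l-1}\le n<b^l\\ k(n)\le k}}\frac{v_{k-k(n);m}}{(n+1)^{m+1}}.$$
   Context: Fix $b\ge2$ and $d\in\{0,\dots,b-1\}$. For an integer $n\ge0$, $k(n)$ is the number of occurrences of $d$ in its base-$b$ representation without leading zeros, and $H^{(k)}=\sum_{n\ge1,\ k(n)=k}1/n$. A string is a finite sequence $X=(d_l,\dots,d_1)$ of digits in $\{0,\dots,b-1\}$ (leading zeros allowed), of length $|X|=l\ge0$; its value is $n(X)=\sum_{i=1}^{l}d_ib^{i-1}$ ($0$ for the empty string). For $k\ge0$, $\mu_k=\sum_{X}b^{-|X|}\delta_{n(X)/b^{|X|}}$, the sum over all strings $X$ containing $d$ exactly $k$ times; it is a finite measure on $[0,1)$ of total mass $b$. Moments: $u_{k;m}=\int_{[0,1)}x^m\,d\mu_k(x)$ and $v_{k;m}=\int_{[0,1)}(1-x)^m\,d\mu_k(x)$ (with $0^0=1$). *)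

theory Defs
  imports "HOL-Analysis.Analysis"
begin

(* k(n): number of occurrences of digit d in the base-b representation of n
   without leading zeros (n = 0 has the empty representation). *)
function dcount :: "nat \<Rightarrow> nat \<Rightarrow> nat \<Rightarrow> nat" where
  "dcount b d n = (if n = 0 \<or> b < 2 then 0
                   else (if n mod b = d then 1 else 0) + dcount b d (n div b))"
  by auto
termination by (relation "Wellfounded.measure (\<lambda>(b,d,n). n)") auto

declare dcount.simps[simp del]

definition Hk :: "nat \<Rightarrow> nat \<Rightarrow> nat \<Rightarrow> real" where
  "Hk b d k = infsum (\<lambda>n. 1 / real n) {n. 0 < n \<and> dcount b d n = k}"

(* value of a string X = [d_l, ..., d_1] (written order, leading zeros allowed) *)
definition strval :: "nat \<Rightarrow> nat list \<Rightarrow> nat" where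
  "strval b X = foldl (\<lambda>a x. a * b + x) 0 X"

definition strs :: "nat \<Rightarrow> nat \<Rightarrow> nat \<Rightarrow> nat list set" where
  "strs b d k = {X. set X \<subseteq> {..<b} \<and> count_list X d = k}"

(* moments u_{k;m} and v_{k;m}: integrals against mu_k, i.e. the countable sums
   sum_X b^{-|X|} x_X^m and sum_X b^{-|X|} (1 - x_X)^m, with x_X = n(X)/b^{|X|}
   (0^0 = 1) *)
definition umom :: "nat \<Rightarrow> nat \<Rightarrow> nat \<Rightarrow> nat \<Rightarrow> real" where
  "umom b d k m = infsum (\<lambda>X. (1 / real b) ^ length X *
       (real (strval b X) / real b ^ length X) ^ m) (strs b d k)"

definition vmom :: "nat \<Rightarrow> nat \<Rightarrow> nat \<Rightarrow> nat \<Rightarrow> real" where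
  "vmom b d k m = infsum (\<lambda>X. (1 / real b) ^ length X *
       (1 - real (strval b X) / real b ^ length X) ^ m) (strs b d k)"

end

theory Submission
  imports Defs
begin

(*
  Every n >= b^L is uniquely n = m * b^|X| + n(X) with b^L <= m < b^(L+1) and X a digit string,
  and then k(n) = k(m) + (number of d in X). Hence the part of H^(k) with n >= b^L splits into
  one block per leading part m, and the block of m is  sum_X b^-|X| / (m + x_X), i.e. the
  integral of 1/(m + x) against mu_(k - k(m)), where x_X = n(X)/b^|X| lies in [0,1).
  Expanding 1/(m + x) in powers of -x/m, or in powers of (1-x)/(m+1) after writing
  m + x = (m+1) - (1-x), and integrating termwise (dominated convergence over the countable
  set of strings) yields the two series. Their zeroth terms are b/m and b/(m+1), because mu_k
  has mass b: splitting off the first digit gives M_k = [k = 0] + (b-1)/b M_k + M_(k-1)/b.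
*)

lemma strval_Nil [simp]: "strval b [] = 0"
  by (simp add: strval_def)

lemma strval_snoc [simp]: "strval b (X @ [c]) = strval b X * b + c"
  by (simp add: strval_def)

lemma strval_less_power: "set X \<subseteq> {..<b} \<Longrightarrow> strval b X < b ^ length X"
proof (induction X rule: rev_induct)
  case (snoc c X)
  then have "strval b X + 1 \<le> b ^ length X" "c < b" by auto
  then have "strval b X * b + c < b ^ length X * b"
    using mult_le_mono1[of "strval b X + 1" "b ^ length X" b] by simp
  then show ?case by (simp add: mult.commute)
qed simp

lemma strval_inj:
  assumes "set X \<subseteq> {..<b}" "set Y \<subseteq> {..<b}" "length X = length Y" "strval b X = strval b Y"
  shows "X = Y"
  using assms
proof (induction X arbitrary: Y rule: rev_induct)
  case (snoc c X)
  then obtain Y' c' where Y: "Y = Y' @ [c']"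
    by (metis length_0_conv rev_exhaust snoc_eq_iff_butlast)
  have digits: "c < b" "c' < b" using snoc.prems Y by auto
  have eq: "strval b X * b + c = strval b Y' * b + c'" using snoc.prems Y by simp
  have "c = c'" using arg_cong[OF eq, of "\<lambda>t. t mod b"] digits by simp
  moreover have "strval b X = strval b Y'" using arg_cong[OF eq, of "\<lambda>t. t div b"] digits by simp
  ultimately show ?case using snoc Y by auto
qed simp

lemma dcount_mult_add:
  assumes "b \<ge> 2" "n > 0" "c < b"
  shows "dcount b d (n * b + c) = (if c = d then 1 else 0) + dcount b d n"
proof -
  have "(n * b + c) mod b = c" "(n * b + c) div b = n" "n * b + c \<noteq> 0"
    using assms by auto
  then show ?thesis using assms by (subst dcount.simps) simp
qed

lemma dcount_shift_append:
  assumes "b \<ge> 2" "m > 0" "set X \<subseteq> {..<b}"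
  shows "dcount b d (m * b ^ length X + strval b X) = dcount b d m + count_list X d"
  using assms(3)
proof (induction X rule: rev_induct)
  case (snoc c X)
  have shift: "m * b ^ length (X @ [c]) + strval b (X @ [c]) = (m * b ^ length X + strval b X) * b + c"
    by (simp add: algebra_simps)
  have pos: "m * b ^ length X + strval b X > 0" using assms by simp
  show ?case
    using snoc dcount_mult_add[OF assms(1) pos, of c d] by (simp only: shift) auto
qed simp

lemma digit_block_bounds:
  assumes "b \<ge> 2" "b ^ L \<le> m" "m < b ^ Suc L" "set X \<subseteq> {..<b}"
  shows "b ^ (L + length X) \<le> m * b ^ length X + strval b X"
    and "m * b ^ length X + strval b X < b ^ (Suc L + length X)"
proof -
  show "b ^ (L + length X) \<le> m * b ^ length X + strval b X"
    using assms by (simp add: power_add trans_le_add1)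
  have "m * b ^ length X + strval b X < (m + 1) * b ^ length X"
    using strval_less_power[OF assms(4)] by simp
  also have "\<dots> \<le> b ^ Suc L * b ^ length X"
    using assms(3) by (intro mult_right_mono) auto
  finally show "m * b ^ length X + strval b X < b ^ (Suc L + length X)"
    by (simp add: power_add)
qed

lemma digit_block_decomposition_exists:
  assumes "b \<ge> 2" "b ^ L \<le> n"
  shows "\<exists>m X. b ^ L \<le> m \<and> m < b ^ Suc L \<and> set X \<subseteq> {..<b} \<and> n = m * b ^ length X + strval b X"
  using assms(2)
proof (induction n rule: less_induct)
  case (less n)
  show ?case
  proof (cases "n < b ^ Suc L")
    case True
    then show ?thesis using less.prems by (intro exI[of _ n] exI[of _ "[]"]) auto
  next
    case False
    then have "b ^ L \<le> n div b"
      using assms(1) by (metis div_le_mono nonzero_mult_div_cancel_right not_less power_Suc2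
          zero_neq_numeral le_zero_eq)
    moreover have "n div b < n"
      using assms(1) less.prems by (metis div_less_dividend le_zero_eq less_le_trans nat_less_le
          one_less_numeral_iff power_not_zero semiring_norm(76) zero_neq_numeral not_less)
    ultimately obtain m X where mX: "b ^ L \<le> m" "m < b ^ Suc L" "set X \<subseteq> {..<b}"
      "n div b = m * b ^ length X + strval b X" using less.IH by blast
    have "n = m * b ^ length (X @ [n mod b]) + strval b (X @ [n mod b])"
      using mX(4) div_mult_mod_eq[of n b] by (simp add: algebra_simps)
    then show ?thesis using mX assms(1)
      by (intro exI[of _ m] exI[of _ "X @ [n mod b]"]) auto
  qed
qed

lemma bij_betw_digit_blocks:
  assumes "b \<ge> 2"
  shows "bij_betw (\<lambda>(m, X). m * b ^ length X + strval b X)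
           ({b ^ L..<b ^ Suc L} \<times> {X. set X \<subseteq> {..<b}}) {b ^ L..}"
proof (rule bij_betw_imageI)
  have "m = m' \<and> X = X'"
    if block: "b ^ L \<le> m" "m < b ^ Suc L" "set X \<subseteq> {..<b}"
      and block': "b ^ L \<le> m'" "m' < b ^ Suc L" "set X' \<subseteq> {..<b}"
      and eq: "m * b ^ length X + strval b X = m' * b ^ length X' + strval b X'" for m X m' X'
  proof -
    have "L + length X' < Suc L + length X" "L + length X < Suc L + length X'"
      using digit_block_bounds[OF assms block] digit_block_bounds[OF assms block'] eq assms
      by (metis le_less_trans one_less_numeral_iff power_less_imp_less_exp semiring_norm(76)
          order.strict_trans2)+
    then have len: "length X = length X'" by linarith
    have "b ^ length X > 0" using assms by simp
    then have "m = m'" "strval b X = strval b X'"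
      using arg_cong[OF eq, of "\<lambda>t. t div b ^ length X"] arg_cong[OF eq, of "\<lambda>t. t mod b ^ length X"]
        strval_less_power[OF block(3)] strval_less_power[OF block'(3)] len
      by simp_all
    then show "m = m' \<and> X = X'" using strval_inj[OF block(3) block'(3) len] by simp
  qed
  then show "inj_on (\<lambda>(m, X). m * b ^ length X + strval b X) ({b ^ L..<b ^ Suc L} \<times> {X. set X \<subseteq> {..<b}})"
    by (auto simp: inj_on_def)
  have "b ^ L \<le> m * b ^ length X + strval b X"
    if "b ^ L \<le> m" "m < b ^ Suc L" "set X \<subseteq> {..<b}" for m X
    using digit_block_bounds(1)[OF assms that] power_increasing[of L "L + length X" b] assms
    by linarith
  then show "(\<lambda>(m, X). m * b ^ length X + strval b X) ` ({b ^ L..<b ^ Suc L} \<times> {X. set X \<subseteq> {..<b}})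
      = {b ^ L..}"
    using digit_block_decomposition_exists[OF assms, of L] by fastforce
qed

(* mu_k is the sum over X in strs b d k of point masses str_weight b X at str_point b X. *)
definition str_weight :: "nat \<Rightarrow> nat list \<Rightarrow> real" where
  "str_weight b X = (1 / real b) ^ length X"

definition str_point :: "nat \<Rightarrow> nat list \<Rightarrow> real" where
  "str_point b X = real (strval b X) / real b ^ length X"

lemma umom_eq: "umom b d k m = infsum (\<lambda>X. str_weight b X * str_point b X ^ m) (strs b d k)"
  by (simp add: umom_def str_weight_def str_point_def)

lemma vmom_eq: "vmom b d k m = infsum (\<lambda>X. str_weight b X * (1 - str_point b X) ^ m) (strs b d k)"
  by (simp add: vmom_def str_weight_def str_point_def)

lemma str_weight_nonneg: "0 \<le> str_weight b X"
  by (simp add: str_weight_def)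

lemma str_point_bounds:
  assumes "b \<ge> 2" "X \<in> strs b d k"
  shows "0 \<le> str_point b X" "str_point b X < 1"
proof -
  have "strval b X < b ^ length X"
    using assms(2) strval_less_power by (simp add: strs_def)
  then have "real (strval b X) < real b ^ length X"
    by (metis of_nat_less_iff of_nat_power)
  then show "0 \<le> str_point b X" "str_point b X < 1"
    using assms(1) by (simp_all add: str_point_def)
qed

lemma strs_length_filter_split:
  "strs b d k \<inter> {X. P (length X)} = (if k = 0 \<and> P 0 then {[]} else {}) \<union>
    (\<Union>c\<in>{..<b}. Cons c ` {X. set X \<subseteq> {..<b} \<and> count_list X d + (if c = d then 1 else 0) = k
                                   \<and> P (Suc (length X))})"
  (is "?L = ?R")
proof
  show "?L \<subseteq> ?R"
  proof
    fix X assume X: "X \<in> ?L"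
    show "X \<in> ?R"
    proof (cases X)
      case (Cons c Y)
      then have "X \<in> Cons c ` {X. set X \<subseteq> {..<b} \<and> count_list X d + (if c = d then 1 else 0) = k
                                   \<and> P (Suc (length X))}"
        using X by (auto simp: strs_def)
      moreover have "c < b" using X Cons by (auto simp: strs_def)
      ultimately show ?thesis by blast
    qed (use X in \<open>auto simp: strs_def\<close>)
  qed
qed (auto simp: strs_def)

lemma has_sum_str_weight_Cons:
  assumes "(str_weight b has_sum s) A"
  shows "(str_weight b has_sum (s / b)) (Cons c ` A)"
proof -
  have "((\<lambda>X. str_weight b X * (1 / b)) has_sum (s * (1 / b))) A"
    by (rule has_sum_cmult_left[OF assms])
  then show ?thesis by (subst has_sum_reindex) (auto simp: str_weight_def comp_def)
qed

(* The length filter P (and its shift Q) lets one recursion serve both the truncations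
   length X <= N and the full sum. *)
lemma has_sum_str_weight_first_digit:
  assumes b: "b \<ge> 2" "d < b"
    and same: "(str_weight b has_sum s) (strs b d k \<inter> {X. Q (length X)})"
    and fewer: "k > 0 \<Longrightarrow> (str_weight b has_sum s') (strs b d (k - 1) \<inter> {X. Q (length X)})"
    and PQ: "\<And>n. P (Suc n) = Q n"
  shows "(str_weight b has_sum ((if k = 0 \<and> P 0 then 1 else 0) + (real b - 1) / b * s
            + (if k > 0 then s' / b else 0))) (strs b d k \<inter> {X. P (length X)})"
proof -
  define I where "I c = {X. set X \<subseteq> {..<b} \<and> count_list X d + (if c = d then 1 else 0) = k
                              \<and> P (Suc (length X))}" for c
  define t where "t c = (if c \<noteq> d then s else if k > 0 then s' else 0)" for c
  have tail: "(str_weight b has_sum t c) (I c)" for c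
  proof -
    consider "c \<noteq> d" | "c = d" "k > 0" | "c = d" "k = 0" by blast
    then show ?thesis
    proof cases
      case 1
      then have "I c = strs b d k \<inter> {X. Q (length X)}" by (auto simp: I_def strs_def PQ)
      then show ?thesis using same 1 by (simp add: t_def)
    next
      case 2
      then have "I c = strs b d (k - 1) \<inter> {X. Q (length X)}" by (auto simp: I_def strs_def PQ)
      then show ?thesis using fewer 2 by (simp add: t_def)
    qed (simp add: I_def t_def)
  qed
  then have nonempty: "(str_weight b has_sum (\<Sum>c<b. t c / b)) (\<Union>c\<in>{..<b}. Cons c ` I c)"
    by (intro sum_has_sum has_sum_str_weight_Cons) auto
  have "(\<Sum>c<b. t c / b) = t d / b + (\<Sum>c\<in>{..<b} - {d}. s / b)"
    using b by (simp add: sum.remove[of _ d] t_def)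
  also have "\<dots> = (real b - 1) / b * s + (if k > 0 then s' / b else 0)"
    using b by (simp add: of_nat_diff t_def)
  finally have sum_t: "(\<Sum>c<b. t c / b) = \<dots>" .
  have empty: "(str_weight b has_sum (if k = 0 \<and> P 0 then 1 else 0)) (if k = 0 \<and> P 0 then {[]} else {})"
    by (simp add: str_weight_def has_sum_finiteI)
  have "(str_weight b has_sum ((if k = 0 \<and> P 0 then 1 else 0) + (\<Sum>c<b. t c / b)))
      ((if k = 0 \<and> P 0 then {[]} else {}) \<union> (\<Union>c\<in>{..<b}. Cons c ` I c))"
    by (rule has_sum_Un_disjoint[OF empty nonempty]) auto
  then show ?thesis
    unfolding strs_length_filter_split[of b d k P] I_def[symmetric] sum_t by (simp add: add.assoc)
qed

lemma str_weight_truncated_sum_le: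
  assumes b: "b \<ge> 2" "d < b"
  shows "\<exists>s \<le> real b. (str_weight b has_sum s) (strs b d k \<inter> {X. length X \<le> N})"
proof (induction N arbitrary: k)
  case 0
  have trunc0: "strs b d k \<inter> {X. length X \<le> 0} = (if k = 0 then {[]} else {})"
    by (auto simp: strs_def)
  have "(str_weight b has_sum (if k = 0 then 1 else 0)) (if k = 0 then {[]} else {})"
    by (simp add: str_weight_def has_sum_finiteI)
  moreover have "(if k = 0 then 1 else 0) \<le> real b" using b by simp
  ultimately show ?case unfolding trunc0 by blast
next
  case (Suc N)
  obtain s where s: "s \<le> real b" "(str_weight b has_sum s) (strs b d k \<inter> {X. length X \<le> N})"
    using Suc by blast
  obtain s' where s': "s' \<le> real b" "(str_weight b has_sum s') (strs b d (k - 1) \<inter> {X. length X \<le> N})"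
    using Suc by blast
  have "(real b - 1) / b * s \<le> (real b - 1) / b * b"
    using s b by (intro mult_left_mono) auto
  then have "(real b - 1) / b * s \<le> real b - 1" using b by simp
  moreover have "s' / b \<le> 1" using s' b by simp
  ultimately have "(if k = 0 then 1 else 0) + (real b - 1) / b * s + (if k > 0 then s' / b else 0) \<le> real b"
    by (cases "k = 0") auto
  moreover have "(str_weight b has_sum ((if k = 0 then 1 else 0) + (real b - 1) / b * s
      + (if k > 0 then s' / b else 0))) (strs b d k \<inter> {X. length X \<le> Suc N})"
    using has_sum_str_weight_first_digit[OF b s(2) s'(2), where P="\<lambda>n. n \<le> Suc N"] by simp
  ultimately show ?case by blast
qed

lemma str_weight_summable:
  assumes "b \<ge> 2" "d < b"
  shows "str_weight b summable_on strs b d k"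
proof (rule nonneg_bdd_above_summable_on[OF str_weight_nonneg bdd_aboveI])
  fix y assume "y \<in> sum (str_weight b) ` {F. F \<subseteq> strs b d k \<and> finite F}"
  then obtain F where F: "F \<subseteq> strs b d k" "finite F" "y = sum (str_weight b) F" by auto
  then have "F \<subseteq> strs b d k \<inter> {X. length X \<le> Max (length ` F)}" by auto
  moreover obtain s where "s \<le> real b" "(str_weight b has_sum s) (strs b d k \<inter> {X. length X \<le> Max (length ` F)})"
    using str_weight_truncated_sum_le[OF assms] by blast
  ultimately show "y \<le> real b"
    using finite_sum_le_has_sum[of "str_weight b" _ _ F] F str_weight_nonneg by fastforce
qed

lemma has_sum_str_weight:
  assumes b: "b \<ge> 2" "d < b"
  shows "(str_weight b has_sum real b) (strs b d k)"
proof -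
  define S where "S k = infsum (str_weight b) (strs b d k)" for k
  have S: "(str_weight b has_sum S k) (strs b d k \<inter> {X. True})" for k
    using str_weight_summable[OF b] by (simp add: S_def)
  have "S k = (if k = 0 then 1 else 0) + (real b - 1) / b * S k + (if k > 0 then S (k - 1) / b else 0)" for k
    using has_sum_unique[OF S has_sum_str_weight_first_digit[OF b S S, of "\<lambda>_. True"]] by simp
  then have "S k / b = (if k = 0 then 1 else S (k - 1) / b)" for k
    using b by (simp add: field_simps split: if_split_asm)
  then have "S k / b = 1" by (induction k) auto
  then show ?thesis using S[of k] b by simp
qed

lemma has_sum_diff:
  fixes f g :: "'a \<Rightarrow> 'b::topological_ab_group_add"
  assumes "(f has_sum a) A" "(g has_sum b) A"
  shows "((\<lambda>x. f x - g x) has_sum (a - b)) A"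
proof -
  have "((\<lambda>x. - g x) has_sum (- b)) A" using assms(2) by (simp add: has_sum_uminus)
  from has_sum_add[OF assms(1) this] show ?thesis by simp
qed

lemma has_sum_sum:
  fixes f :: "'i \<Rightarrow> 'a \<Rightarrow> 'b::topological_comm_monoid_add"
  assumes "finite I" "\<And>i. i \<in> I \<Longrightarrow> (f i has_sum s i) A"
  shows "((\<lambda>x. \<Sum>i\<in>I. f i x) has_sum (\<Sum>i\<in>I. s i)) A"
  using assms by (induction I rule: finite_induct) (auto intro: has_sum_add)

lemma sum_power_div_power_Suc:
  fixes a r :: real
  assumes "a \<noteq> 0" "a \<noteq> r"
  shows "(\<Sum>i<N. r ^ i / a ^ Suc i) = (1 - (r / a) ^ N) / (a - r)"
proof -
  have "(\<Sum>i<N. r ^ i / a ^ Suc i) = (\<Sum>i<N. (r / a) ^ i) / a"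
    by (simp add: sum_divide_distrib power_divide mult.commute)
  also have "\<dots> = (1 - (r / a) ^ N) / (1 - r / a) / a"
    using assms by (simp add: sum_gp_strict)
  also have "\<dots> = (1 - (r / a) ^ N) / (a - r)"
    using assms by (simp add: field_simps)
  finally show ?thesis .
qed

lemma infsum_mult_power_tendsto_0:
  fixes w z :: "'a \<Rightarrow> real"
  assumes w: "w summable_on W" "\<And>X. X \<in> W \<Longrightarrow> 0 \<le> w X"
    and z: "\<And>X. X \<in> W \<Longrightarrow> 0 \<le> z X \<and> z X < 1"
  shows "(\<lambda>N. infsum (\<lambda>X. w X * z X ^ N) W) \<longlonglongrightarrow> 0"
proof (rule LIMSEQ_I)
  fix \<epsilon> :: real assume "0 < \<epsilon>"
  have dom: "0 \<le> w X * z X ^ N \<and> w X * z X ^ N \<le> w X" if "X \<in> W" for X N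
    using w(2)[OF that] z[OF that] by (simp add: power_le_one mult_left_le)
  have summable: "(\<lambda>X. w X * z X ^ N) summable_on B" if "B \<subseteq> W" for N B
    by (rule summable_on_comparison_test[OF summable_on_subset_banach[OF w(1) that]])
       (use dom that in auto)
  obtain F where F: "finite F" "F \<subseteq> W" "dist (sum w F) (infsum w W) \<le> \<epsilon> / 2"
    using infsum_finite_approximation[OF w(1), of "\<epsilon> / 2"] \<open>0 < \<epsilon>\<close> by auto
  have W_split: "W = F \<union> (W - F)" using F by auto
  have "infsum w W = sum w F + infsum w (W - F)"
    by (subst W_split, subst infsum_Un_disjoint)
       (use F summable_on_subset_banach[OF w(1)] in auto)
  then have rest: "infsum w (W - F) \<le> \<epsilon> / 2" using F(3) by (simp add: dist_real_def)
  have "(\<lambda>N. \<Sum>X\<in>F. w X * z X ^ N) \<longlonglongrightarrow> (\<Sum>X\<in>F. w X * 0)"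
    by (intro tendsto_sum tendsto_mult tendsto_const LIMSEQ_power_zero) (use z F in auto)
  then obtain N0 where N0: "\<forall>N\<ge>N0. norm ((\<Sum>X\<in>F. w X * z X ^ N) - 0) < \<epsilon> / 2"
    using LIMSEQ_D[of _ 0 "\<epsilon> / 2"] \<open>0 < \<epsilon>\<close> by fastforce
  have "norm (infsum (\<lambda>X. w X * z X ^ N) W - 0) < \<epsilon>" if "N \<ge> N0" for N
  proof -
    have "infsum (\<lambda>X. w X * z X ^ N) W
        = (\<Sum>X\<in>F. w X * z X ^ N) + infsum (\<lambda>X. w X * z X ^ N) (W - F)"
      by (subst W_split, subst infsum_Un_disjoint) (use F summable in auto)
    moreover have "infsum (\<lambda>X. w X * z X ^ N) (W - F) \<le> infsum w (W - F)"
      by (rule infsum_mono[OF summable summable_on_subset_banach[OF w(1)]]) (use dom in auto)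
    moreover have "0 \<le> infsum (\<lambda>X. w X * z X ^ N) W"
      by (rule infsum_nonneg) (use dom in auto)
    ultimately show ?thesis using rest N0 that by auto
  qed
  then show "\<exists>N0. \<forall>N\<ge>N0. norm (infsum (\<lambda>X. w X * z X ^ N) W - 0) < \<epsilon>" by blast
qed

lemma sums_infsum_div_diff:
  fixes w r :: "'a \<Rightarrow> real" and a :: real
  assumes w: "w summable_on W" "\<And>X. X \<in> W \<Longrightarrow> 0 \<le> w X"
    and r: "\<And>X. X \<in> W \<Longrightarrow> 1 \<le> a - r X" "\<And>X. X \<in> W \<Longrightarrow> \<bar>r X\<bar> < a"
      "\<And>X. X \<in> W \<Longrightarrow> \<bar>r X\<bar> \<le> 1"
  shows "(\<lambda>i. infsum (\<lambda>X. w X * r X ^ i) W / a ^ Suc i) sums infsum (\<lambda>X. w X / (a - r X)) W"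
proof -
  define rem where "rem N X = w X * (r X / a) ^ N / (a - r X)" for N X
  have ratio: "0 \<le> \<bar>r X\<bar> / a \<and> \<bar>r X\<bar> / a < 1" if "X \<in> W" for X
    using r(2)[OF that] by auto
  have dom: "norm (rem N X) \<le> w X * (\<bar>r X\<bar> / a) ^ N" "w X * (\<bar>r X\<bar> / a) ^ N \<le> w X"
    "norm (w X * r X ^ N) \<le> w X" "norm (w X / (a - r X)) \<le> w X" if "X \<in> W" for N X
  proof -
    have "(\<bar>r X\<bar> / a) ^ N \<le> 1" "\<bar>r X\<bar> ^ N \<le> 1"
      using ratio[OF that] r(3)[OF that] by (simp_all add: power_le_one)
    moreover have "x / (a - r X) \<le> x" if "0 \<le> x" for x
      using that r(1)[OF \<open>X \<in> W\<close>] divide_left_mono[of 1 "a - r X" x] by simp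
    moreover have "\<bar>a\<bar> = a" using r(2)[OF that] by simp
    ultimately show "norm (rem N X) \<le> w X * (\<bar>r X\<bar> / a) ^ N" "w X * (\<bar>r X\<bar> / a) ^ N \<le> w X"
      "norm (w X * r X ^ N) \<le> w X" "norm (w X / (a - r X)) \<le> w X"
      using w(2)[OF that] r(1)[OF that] ratio[OF that]
      by (simp_all add: rem_def abs_mult power_abs mult_left_le)
  qed
  have dom_summable: "(\<lambda>X. w X * (\<bar>r X\<bar> / a) ^ N) summable_on W" for N
    by (rule summable_on_comparison_test[OF w(1)]) (use dom(2) w(2) ratio in auto)
  have rem_abs: "(\<lambda>X. norm (rem N X)) summable_on W" for N
    by (rule Infinite_Sum.abs_summable_on_comparison_test'[OF dom_summable]) (use dom(1) in auto)
  have pow_summable: "(\<lambda>X. w X * r X ^ i) summable_on W" for i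
    by (rule abs_summable_summable[OF Infinite_Sum.abs_summable_on_comparison_test'[OF w(1)]])
       (use dom(3) in auto)
  have div_summable: "(\<lambda>X. w X / (a - r X)) summable_on W"
    by (rule abs_summable_summable[OF Infinite_Sum.abs_summable_on_comparison_test'[OF w(1)]])
       (use dom(4) in auto)
  have partial: "(\<Sum>i<N. infsum (\<lambda>X. w X * r X ^ i) W / a ^ Suc i)
      = infsum (\<lambda>X. w X / (a - r X)) W - infsum (rem N) W" for N
  proof -
    have series: "((\<lambda>X. \<Sum>i<N. w X * r X ^ i * (1 / a ^ Suc i))
            has_sum (\<Sum>i<N. infsum (\<lambda>X. w X * r X ^ i) W * (1 / a ^ Suc i))) W"
      using pow_summable by (intro has_sum_sum has_sum_cmult_left) auto
    have difference: "((\<lambda>X. w X / (a - r X) - rem N X)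
        has_sum (infsum (\<lambda>X. w X / (a - r X)) W - infsum (rem N) W)) W"
      using div_summable abs_summable_summable[OF rem_abs] by (intro has_sum_diff) auto
    have pointwise: "(\<Sum>i<N. w X * r X ^ i * (1 / a ^ Suc i)) = w X / (a - r X) - rem N X"
      if "X \<in> W" for X
    proof -
      have "a \<noteq> 0" "a \<noteq> r X" using r(1,2)[OF that] by auto
      have "(\<Sum>i<N. w X * r X ^ i * (1 / a ^ Suc i)) = w X * (\<Sum>i<N. r X ^ i / a ^ Suc i)"
        by (simp add: sum_distrib_left)
      also have "\<dots> = w X * ((1 - (r X / a) ^ N) / (a - r X))"
        by (simp only: sum_power_div_power_Suc[OF \<open>a \<noteq> 0\<close> \<open>a \<noteq> r X\<close>])
      finally show ?thesis by (simp add: rem_def diff_divide_distrib right_diff_distrib)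
    qed
    have "((\<lambda>X. w X / (a - r X) - rem N X)
        has_sum (\<Sum>i<N. infsum (\<lambda>X. w X * r X ^ i) W * (1 / a ^ Suc i))) W"
      using series by (rule has_sum_cong[THEN iffD1, rotated]) (use pointwise in auto)
    then show ?thesis using has_sum_unique[OF difference] by simp
  qed
  have "(\<lambda>N. infsum (rem N) W) \<longlonglongrightarrow> 0"
  proof (rule Lim_null_comparison)
    have "norm (infsum (rem N) W) \<le> infsum (\<lambda>X. w X * (\<bar>r X\<bar> / a) ^ N) W" for N
    proof -
      have "norm (infsum (rem N) W) \<le> infsum (\<lambda>X. norm (rem N X)) W"
        by (rule norm_infsum_bound) (use rem_abs in auto)
      also have "\<dots> \<le> infsum (\<lambda>X. w X * (\<bar>r X\<bar> / a) ^ N) W"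
        by (rule infsum_mono[OF rem_abs dom_summable]) (use dom(1) in auto)
      finally show ?thesis .
    qed
    then show "\<forall>\<^sub>F N in sequentially. norm (infsum (rem N) W) \<le> infsum (\<lambda>X. w X * (\<bar>r X\<bar> / a) ^ N) W"
      by simp
    show "(\<lambda>N. infsum (\<lambda>X. w X * (\<bar>r X\<bar> / a) ^ N) W) \<longlonglongrightarrow> 0"
      by (rule infsum_mult_power_tendsto_0[OF w ratio])
  qed
  then have "(\<lambda>N. infsum (\<lambda>X. w X / (a - r X)) W - infsum (rem N) W)
      \<longlonglongrightarrow> infsum (\<lambda>X. w X / (a - r X)) W - 0"
    by (intro tendsto_diff tendsto_const)
  then show ?thesis unfolding sums_def partial by simp
qed

definition stieltjes_mu :: "nat \<Rightarrow> nat \<Rightarrow> nat \<Rightarrow> nat \<Rightarrow> real" where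
  "stieltjes_mu b d k n = infsum (\<lambda>X. str_weight b X / (real n + str_point b X)) (strs b d k)"

lemma umom_0: "b \<ge> 2 \<Longrightarrow> d < b \<Longrightarrow> umom b d k 0 = real b"
  using has_sum_str_weight by (simp add: umom_eq infsumI)

lemma vmom_0: "b \<ge> 2 \<Longrightarrow> d < b \<Longrightarrow> vmom b d k 0 = real b"
  using has_sum_str_weight by (simp add: vmom_eq infsumI)

lemma has_sum_stieltjes_mu:
  assumes b: "b \<ge> 2" "d < b" and n: "n > 0"
  shows "((\<lambda>X. 1 / real (n * b ^ length X + strval b X)) has_sum stieltjes_mu b d k n) (strs b d k)"
proof -
  have "(\<lambda>X. str_weight b X / (real n + str_point b X)) summable_on strs b d k"
  proof (rule summable_on_comparison_test[OF str_weight_summable[OF b]])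
    fix X assume "X \<in> strs b d k"
    then have "1 \<le> real n + str_point b X" using n str_point_bounds(1)[OF b(1)] by force
    then show "str_weight b X / (real n + str_point b X) \<le> str_weight b X"
      and "0 \<le> str_weight b X / (real n + str_point b X)"
      using divide_left_mono[of 1 "real n + str_point b X" "str_weight b X"] str_weight_nonneg
      by simp_all
  qed
  moreover have "1 / real (n * b ^ length X + strval b X) = str_weight b X / (real n + str_point b X)" for X
  proof -
    have "real b ^ length X > 0" using b by simp
    then show ?thesis using b by (simp add: str_weight_def str_point_def field_simps)
  qed
  ultimately show ?thesis by (simp add: stieltjes_mu_def)
qed

lemma stieltjes_mu_umom_expansion:
  assumes b: "b \<ge> 2" "d < b" and n: "n > 0"
  shows "(\<lambda>i. (-1) ^ Suc i * (umom b d k (Suc i) / real n ^ (Suc i + 1)))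
           sums (stieltjes_mu b d k n - real b / real n)"
proof -
  define f where "f i = (-1) ^ i * umom b d k i / real n ^ Suc i" for i
  have "(\<lambda>i. infsum (\<lambda>X. str_weight b X * (- str_point b X) ^ i) (strs b d k) / real n ^ Suc i)
          sums infsum (\<lambda>X. str_weight b X / (real n - - str_point b X)) (strs b d k)"
    using n str_point_bounds[OF b(1), of _ d k]
    by (intro sums_infsum_div_diff[OF str_weight_summable[OF b]]) (force intro: str_weight_nonneg)+
  moreover have "infsum (\<lambda>X. str_weight b X * (- str_point b X) ^ i) (strs b d k) = (-1) ^ i * umom b d k i" for i
  proof -
    have "infsum (\<lambda>X. str_weight b X * (- str_point b X) ^ i) (strs b d k)
        = infsum (\<lambda>X. (-1) ^ i * (str_weight b X * str_point b X ^ i)) (strs b d k)"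
      by (rule infsum_cong) (simp add: power_minus[of "str_point b _"])
    then show ?thesis by (simp only: infsum_cmult_right' umom_eq)
  qed
  ultimately have "f sums stieltjes_mu b d k n"
    unfolding f_def[abs_def] stieltjes_mu_def by simp
  then have "(\<lambda>i. f (Suc i)) sums (stieltjes_mu b d k n - f 0)"
    by (simp add: sums_Suc_iff)
  then show ?thesis using umom_0[OF b] by (simp add: f_def)
qed

lemma stieltjes_mu_vmom_expansion:
  assumes b: "b \<ge> 2" "d < b" and n: "n > 0"
  shows "(\<lambda>i. vmom b d k (Suc i) / real (n + 1) ^ (Suc i + 1))
           sums (stieltjes_mu b d k n - real b / real (n + 1))"
proof -
  define f where "f i = vmom b d k i / real (n + 1) ^ Suc i" for i
  have "(\<lambda>i. infsum (\<lambda>X. str_weight b X * (1 - str_point b X) ^ i) (strs b d k) / real (n + 1) ^ Suc i)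
          sums infsum (\<lambda>X. str_weight b X / (real (n + 1) - (1 - str_point b X))) (strs b d k)"
    using n str_point_bounds[OF b(1), of _ d k]
    by (intro sums_infsum_div_diff[OF str_weight_summable[OF b]]) (force intro: str_weight_nonneg)+
  then have "f sums stieltjes_mu b d k n"
    unfolding f_def[abs_def] vmom_eq stieltjes_mu_def by simp
  then have "(\<lambda>i. f (Suc i)) sums (stieltjes_mu b d k n - f 0)"
    by (simp add: sums_Suc_iff)
  then show ?thesis using vmom_0[OF b] by (simp add: f_def)
qed

lemma bij_betw_restrict_image:
  assumes "bij_betw f A B"
  shows "bij_betw f {x \<in> A. P (f x)} {y \<in> B. P y}"
  by (rule bij_betw_subset[OF assms])
     (use bij_betw_imp_surj_on[OF assms] in auto)

lemma has_sum_inverse_digit_tail: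
  fixes b d k L :: nat
  assumes b: "b \<ge> 2" "d < b"
  defines "M \<equiv> {m. b ^ L \<le> m \<and> m < b ^ Suc L \<and> dcount b d m \<le> k}"
  shows "((\<lambda>n. 1 / real n) has_sum (\<Sum>m\<in>M. stieltjes_mu b d (k - dcount b d m) m))
           {n. b ^ L \<le> n \<and> dcount b d n = k}"
proof -
  define S where "S m = strs b d (k - dcount b d m)" for m
  define blocks where "blocks = {b ^ L..<b ^ Suc L} \<times> {X. set X \<subseteq> {..<b}}"
  define glue where "glue = (\<lambda>(m, X). m * b ^ length X + strval b X)"
  have pos: "m > 0" if "b ^ L \<le> m" for m
    using that b by (metis gr0I le_0_eq power_eq_0_iff zero_neq_numeral)
  have "Sigma M S = {p \<in> blocks. dcount b d (glue p) = k}"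
    using dcount_shift_append[OF b(1) pos]
    by (force simp: M_def S_def blocks_def glue_def strs_def)
  moreover have "{n \<in> {b ^ L..}. dcount b d n = k} = {n. b ^ L \<le> n \<and> dcount b d n = k}"
    by auto
  ultimately have bij: "bij_betw glue (Sigma M S) {n. b ^ L \<le> n \<and> dcount b d n = k}"
    using bij_betw_restrict_image[OF bij_betw_digit_blocks[OF b(1), of L]]
    by (simp add: blocks_def glue_def)
  have "((\<lambda>p. 1 / real (glue p)) has_sum stieltjes_mu b d (k - dcount b d m) m) (Pair m ` S m)"
    if "m \<in> M" for m
    using has_sum_stieltjes_mu[OF b pos, of m "k - dcount b d m"] that
    by (subst has_sum_reindex) (auto simp: inj_on_def glue_def comp_def M_def S_def)
  then have "((\<lambda>p. 1 / real (glue p)) has_sum (\<Sum>m\<in>M. stieltjes_mu b d (k - dcount b d m) m))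
               (\<Union>m\<in>M. Pair m ` S m)"
    by (intro sum_has_sum) (auto simp: M_def)
  moreover have "(\<Union>m\<in>M. Pair m ` S m) = Sigma M S" by auto
  ultimately show ?thesis
    using has_sum_reindex_bij_betw[OF bij, of "\<lambda>n. 1 / real n"] by simp
qed

lemma has_sum_inverse_dcount:
  fixes b d k L :: nat
  assumes b: "b \<ge> 2" "d < b"
  shows "((\<lambda>n. 1 / real n) has_sum
            ((\<Sum>n\<in>{n. 0 < n \<and> n < b ^ L \<and> dcount b d n = k}. 1 / real n)
              + (\<Sum>m\<in>{m. b ^ L \<le> m \<and> m < b ^ Suc L \<and> dcount b d m \<le> k}.
                   stieltjes_mu b d (k - dcount b d m) m)))
          {n. 0 < n \<and> dcount b d n = k}"
proof -
  define head where "head = {n. 0 < n \<and> n < b ^ L \<and> dcount b d n = k}"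
  have tail_pos: "0 < n" if "b ^ L \<le> n" for n
    using that b by (metis gr0I le_0_eq power_eq_0_iff zero_neq_numeral)
  have "finite head" by (auto simp: head_def)
  then have "((\<lambda>n. 1 / real n) has_sum ((\<Sum>n\<in>head. 1 / real n)
      + (\<Sum>m\<in>{m. b ^ L \<le> m \<and> m < b ^ Suc L \<and> dcount b d m \<le> k}. stieltjes_mu b d (k - dcount b d m) m)))
      (head \<union> {n. b ^ L \<le> n \<and> dcount b d n = k})"
    by (intro has_sum_Un_disjoint[OF has_sum_finiteI has_sum_inverse_digit_tail[OF b]])
       (auto simp: head_def)
  moreover have "head \<union> {n. b ^ L \<le> n \<and> dcount b d n = k} = {n. 0 < n \<and> dcount b d n = k}"
    using tail_pos by (auto simp: head_def not_le)
  ultimately show ?thesis by (simp add: head_def)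
qed

theorem mainTheorem8:
  fixes b d k l :: nat
  assumes "b \<ge> 2" and "d < b" and "l \<ge> 1"
  shows "(\<lambda>n. 1 / real n) summable_on {n. 0 < n \<and> dcount b d n = k}
    \<and> summable (\<lambda>m. (-1) ^ (Suc m) *
          (\<Sum>n\<in>{n. b ^ (l - 1) \<le> n \<and> n < b ^ l \<and> dcount b d n \<le> k}.
             umom b d (k - dcount b d n) (Suc m) / real n ^ (Suc m + 1)))
    \<and> Hk b d k =
        (\<Sum>n\<in>{n. 0 < n \<and> n < b ^ (l - 1) \<and> dcount b d n = k}. 1 / real n)
      + real b * (\<Sum>n\<in>{n. b ^ (l - 1) \<le> n \<and> n < b ^ l \<and> dcount b d n \<le> k}. 1 / real n)
      + (\<Sum>m. (-1) ^ (Suc m) *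
          (\<Sum>n\<in>{n. b ^ (l - 1) \<le> n \<and> n < b ^ l \<and> dcount b d n \<le> k}.
             umom b d (k - dcount b d n) (Suc m) / real n ^ (Suc m + 1)))
    \<and> summable (\<lambda>m.
          (\<Sum>n\<in>{n. b ^ (l - 1) \<le> n \<and> n < b ^ l \<and> dcount b d n \<le> k}.
             vmom b d (k - dcount b d n) (Suc m) / real (n + 1) ^ (Suc m + 1)))
    \<and> Hk b d k =
        (\<Sum>n\<in>{n. 0 < n \<and> n < b ^ (l - 1) \<and> dcount b d n = k}. 1 / real n)
      + real b * (\<Sum>n\<in>{n. b ^ (l - 1) \<le> n \<and> n < b ^ l \<and> dcount b d n \<le> k}. 1 / real (n + 1))
      + (\<Sum>m.
          (\<Sum>n\<in>{n. b ^ (l - 1) \<le> n \<and> n < b ^ l \<and> dcount b d n \<le> k}.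
             vmom b d (k - dcount b d n) (Suc m) / real (n + 1) ^ (Suc m + 1)))"
proof -
  note b = assms(1,2)
  define M where "M = {n. b ^ (l - 1) \<le> n \<and> n < b ^ l \<and> dcount b d n \<le> k}"
  define G where "G = (\<Sum>n\<in>M. stieltjes_mu b d (k - dcount b d n) n)"
  have pos: "0 < n" if "n \<in> M" for n
    using that b by (simp add: M_def) (metis gr0I le_0_eq power_eq_0_iff zero_neq_numeral)
  have "((\<lambda>n. 1 / real n) has_sum
      ((\<Sum>n\<in>{n. 0 < n \<and> n < b ^ (l - 1) \<and> dcount b d n = k}. 1 / real n) + G))
      {n. 0 < n \<and> dcount b d n = k}"
    using has_sum_inverse_dcount[OF b, of k "l - 1"] assms(3) by (simp add: G_def M_def)
  moreover have "(\<lambda>i. (-1) ^ Suc i * (\<Sum>n\<in>M. umom b d (k - dcount b d n) (Suc i) / real n ^ (Suc i + 1)))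
      sums (G - real b * (\<Sum>n\<in>M. 1 / real n))"
    using sums_sum[of M, OF stieltjes_mu_umom_expansion[OF b pos]]
    by (simp add: G_def sum_distrib_left sum_subtractf)
  moreover have "(\<lambda>i. \<Sum>n\<in>M. vmom b d (k - dcount b d n) (Suc i) / real (n + 1) ^ (Suc i + 1))
      sums (G - real b * (\<Sum>n\<in>M. 1 / real (n + 1)))"
    using sums_sum[of M, OF stieltjes_mu_vmom_expansion[OF b pos]]
    by (simp add: G_def sum_distrib_left sum_subtractf)
  ultimately show ?thesis
    unfolding M_def[symmetric] Hk_def
    by (auto simp: summable_on_def sums_iff infsumI)
qed

end
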